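(* Let $G_{\mathrm{vc}}=(V_{\mathrm{vc}},E_{\mathrm{vc}})$ be a vertex-capacitated graph and $G_{\mathrm{ec}}$ the corresponding directed edge-capacitated graph. Then for any $u,v\in V_{\mathrm{vc}}$, $\mathrm{dist}_{G_{\mathrm{vc}}}(u,v)=\mathrm{dist}_{G_{\mathrm{ec}}}(u_{\mathrm{mid}},v_{\mathrm{mid}})=\mathrm{dist}_{G_{\mathrm{ec}}}(v_{\mathrm{mid}},u_{\mathrm{mid}})$.
   Context: A vertex-capacitated graph is a finite undirected graph with positive lengths $\ell$ and capacities $u$ on vertices and edges; the length of a path is the sum of the lengths of its vertices and edges, and $\mathrm{dist}_{G_{\mathrm{vc}}}$ is the resulting shortest-path distance. The corresponding directed graph $G_{\mathrm{ec}}$: for each $v\in V_{\mathrm{vc}}$, vertices $v_{\mathrm{in}},v_{\mathrm{mid}},v_{\mathrm{out}}$ and directed edges $(v_{\mathrm{in}},v_{\mathrm{mid}}),(v_{\mathrm{mid}},v_{\mathrm{out}}),(v_{\mathrm{in}},v_{\mathrm{out}})$, each of length $\ell(v)$ and capacity $u(v)$; for each $\{u,v\}\in E_{\mathrm{vc}}$, directed edges $(u_{\mathrm{out}},v_{\mathrm{in}})$ and $(v_{\mathrm{out}},u_{\mathrm{in}})$ of length $\ell(\{u,v\})$ and capacity $u(\{u,v\})$. $\mathrm{dist}_{G_{\mathrm{ec}}}$ is directed shortest-path distance (sum of edge lengths). *)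

theory Defs
  imports Complex_Main "HOL-Library.Extended_Real"
begin

text \<open>Capacities play no role for distances.\<close>

definition vc_graph ::
  "'a set \<Rightarrow> 'a set set \<Rightarrow> ('a \<Rightarrow> real) \<Rightarrow> ('a set \<Rightarrow> real)
   \<Rightarrow> ('a \<Rightarrow> real) \<Rightarrow> ('a set \<Rightarrow> real) \<Rightarrow> bool" where
  "vc_graph V E lv le cv ce \<longleftrightarrow>
     finite V \<and> (\<forall>e\<in>E. e \<subseteq> V \<and> card e = 2) \<and>
     (\<forall>v\<in>V. lv v > 0 \<and> cv v > 0) \<and> (\<forall>e\<in>E. le e > 0 \<and> ce e > 0)"

definition vc_path :: "'a set \<Rightarrow> 'a set set \<Rightarrow> 'a \<Rightarrow> 'a \<Rightarrow> 'a list \<Rightarrow> bool" where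
  "vc_path V E u v p \<longleftrightarrow> p \<noteq> [] \<and> hd p = u \<and> last p = v \<and> distinct p \<and> set p \<subseteq> V \<and>
     (\<forall>i. Suc i < length p \<longrightarrow> {p ! i, p ! Suc i} \<in> E)"

text \<open>Length: sum of the lengths of its vertices and edges; the trivial
one-vertex path (u = v) has length 0 (so that dist(u,u) = 0).\<close>
definition vc_path_len :: "('a \<Rightarrow> real) \<Rightarrow> ('a set \<Rightarrow> real) \<Rightarrow> 'a list \<Rightarrow> real" where
  "vc_path_len lv le p =
     (if length p \<le> 1 then 0
      else sum_list (map lv p) + sum_list (map (\<lambda>(x, y). le {x, y}) (zip p (tl p))))"

definition vc_dist ::
  "'a set \<Rightarrow> 'a set set \<Rightarrow> ('a \<Rightarrow> real) \<Rightarrow> ('a set \<Rightarrow> real) \<Rightarrow> 'a \<Rightarrow> 'a \<Rightarrow> ereal" where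
  "vc_dist V E lv le u v = Inf {ereal (vc_path_len lv le p) | p. vc_path V E u v p}"

definition dir_path :: "'v set \<Rightarrow> ('v \<times> 'v) set \<Rightarrow> 'v \<Rightarrow> 'v \<Rightarrow> 'v list \<Rightarrow> bool" where
  "dir_path W A s t p \<longleftrightarrow> p \<noteq> [] \<and> hd p = s \<and> last p = t \<and> distinct p \<and> set p \<subseteq> W \<and>
     (\<forall>i. Suc i < length p \<longrightarrow> (p ! i, p ! Suc i) \<in> A)"

definition dir_path_len :: "('v \<times> 'v \<Rightarrow> real) \<Rightarrow> 'v list \<Rightarrow> real" where
  "dir_path_len len p = sum_list (map len (zip p (tl p)))"

definition dir_dist ::
  "'v set \<Rightarrow> ('v \<times> 'v) set \<Rightarrow> ('v \<times> 'v \<Rightarrow> real) \<Rightarrow> 'v \<Rightarrow> 'v \<Rightarrow> ereal" where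
  "dir_dist W A len s t = Inf {ereal (dir_path_len len p) | p. dir_path W A s t p}"

datatype copy = In | Mid | Out

definition ec_verts :: "'a set \<Rightarrow> ('a \<times> copy) set" where
  "ec_verts V = V \<times> UNIV"

definition ec_arcs :: "'a set \<Rightarrow> 'a set set \<Rightarrow> (('a \<times> copy) \<times> ('a \<times> copy)) set" where
  "ec_arcs V E =
     {((v, In), (v, Mid)) | v. v \<in> V} \<union> {((v, Mid), (v, Out)) | v. v \<in> V} \<union>
     {((v, In), (v, Out)) | v. v \<in> V} \<union>
     {((x, Out), (y, In)) | x y. {x, y} \<in> E}"

definition ec_len :: "('a \<Rightarrow> real) \<Rightarrow> ('a set \<Rightarrow> real) \<Rightarrow> ('a \<times> copy) \<times> ('a \<times> copy) \<Rightarrow> real" where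
  "ec_len lv le a = (if fst (fst a) = fst (snd a) then lv (fst (fst a))
                     else le {fst (fst a), fst (snd a)})"

definition ec_cap :: "('a \<Rightarrow> real) \<Rightarrow> ('a set \<Rightarrow> real) \<Rightarrow> ('a \<times> copy) \<times> ('a \<times> copy) \<Rightarrow> real" where
  "ec_cap cv ce a = (if fst (fst a) = fst (snd a) then cv (fst (fst a))
                     else ce {fst (fst a), fst (snd a)})"

definition ec_dist ::
  "'a set \<Rightarrow> 'a set set \<Rightarrow> ('a \<Rightarrow> real) \<Rightarrow> ('a set \<Rightarrow> real) \<Rightarrow> 'a \<times> copy \<Rightarrow> 'a \<times> copy \<Rightarrow> ereal" where
  "ec_dist V E lv le = dir_dist (ec_verts V) (ec_arcs V E) (ec_len lv le)"

end

theory Submission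
  imports Defs
begin

text \<open>A path \<open>u = x\<^sub>0, x\<^sub>1, \<dots>, x\<^sub>k = v\<close> with \<open>u \<noteq> v\<close> is traced in \<open>G\<^sub>e\<^sub>c\<close> as
  \<open>(u, Mid), (u, Out), (x\<^sub>1, In), (x\<^sub>1, Out), \<dots>, (v, In), (v, Mid)\<close>, which pays every
  vertex and every edge exactly once. Conversely, the first coordinates of a directed path from
  \<open>(u, Mid)\<close> to \<open>(v, Mid)\<close> form a walk in \<open>G\<^sub>v\<^sub>c\<close>; every gadget it visits contributes at
  least one arc of length \<open>\<ell>(x)\<close>, so the walk is no longer than the directed path, and
  cutting out the cycles of the walk (all lengths are nonnegative) yields a path that is
  shorter still. Symmetry comes from reversing undirected paths.\<close>

abbreviation edge_walk :: "'a set set \<Rightarrow> 'a list \<Rightarrow> bool" where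
  "edge_walk E \<equiv> successively (\<lambda>x y. {x, y} \<in> E)"

abbreviation arc_walk :: "('v \<times> 'v) set \<Rightarrow> 'v list \<Rightarrow> bool" where
  "arc_walk A \<equiv> successively (\<lambda>x y. (x, y) \<in> A)"

definition walk_len :: "('a \<Rightarrow> real) \<Rightarrow> ('a set \<Rightarrow> real) \<Rightarrow> 'a list \<Rightarrow> real" where
  "walk_len lv le p = sum_list (map lv p) + sum_list (map (\<lambda>(x, y). le {x, y}) (zip p (tl p)))"

lemma walk_len_simps [simp]:
  "walk_len lv le [] = 0"
  "walk_len lv le [x] = lv x"
  "walk_len lv le (x # y # ys) = lv x + le {x, y} + walk_len lv le (y # ys)"
  by (simp_all add: walk_len_def)

lemma walk_len_append:
  "xs \<noteq> [] \<Longrightarrow> ys \<noteq> [] \<Longrightarrow>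
     walk_len lv le (xs @ ys) = walk_len lv le xs + le {last xs, hd ys} + walk_len lv le ys"
proof (induction xs rule: induct_list012)
  case (3 x y zs)
  then show ?case by simp
qed (auto simp: neq_Nil_conv)

lemma walk_len_Cons:
  "xs \<noteq> [] \<Longrightarrow> walk_len lv le (x # xs) = lv x + le {x, hd xs} + walk_len lv le xs"
  by (cases xs) auto

lemma walk_len_snoc:
  "walk_len lv le (xs @ [y, z]) = walk_len lv le (xs @ [y]) + le {y, z} + lv z"
  by (induction xs) (simp_all add: walk_len_Cons hd_append)

lemma walk_len_rev: "walk_len lv le (rev p) = walk_len lv le p"
  by (induction p rule: induct_list012) (simp_all add: walk_len_snoc insert_commute)

lemma walk_len_nonneg:
  assumes "edge_walk E p" "\<forall>x\<in>set p. 0 \<le> lv x" "\<forall>e\<in>E. 0 \<le> le e"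
  shows "0 \<le> walk_len lv le p"
  using assms by (induction p rule: induct_list012) auto

lemma vc_path_len_eq_walk_len:
  "vc_path_len lv le p = (if length p \<le> 1 then 0 else walk_len lv le p)"
  by (simp add: vc_path_len_def walk_len_def)

lemma vc_path_iff:
  "vc_path V E u v p \<longleftrightarrow>
     p \<noteq> [] \<and> hd p = u \<and> last p = v \<and> distinct p \<and> set p \<subseteq> V \<and> edge_walk E p"
  by (simp add: vc_path_def successively_conv_nth)

lemma dir_path_iff:
  "dir_path W A s t p \<longleftrightarrow>
     p \<noteq> [] \<and> hd p = s \<and> last p = t \<and> distinct p \<and> set p \<subseteq> W \<and> arc_walk A p"
  by (simp add: dir_path_def successively_conv_nth)

lemma distinct_hd_eq_last_imp_singleton:
  "distinct p \<Longrightarrow> p \<noteq> [] \<Longrightarrow> hd p = last p \<Longrightarrow> p = [hd p]"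
  by (cases p) (auto split: if_splits)

lemma walk_shortcut_to_path:
  assumes "edge_walk E w" "w \<noteq> []" "set w \<subseteq> V"
    and lv: "\<forall>x\<in>V. 0 \<le> lv x" and le: "\<forall>e\<in>E. 0 \<le> le e"
  shows "\<exists>p. vc_path V E (hd w) (last w) p \<and> walk_len lv le p \<le> walk_len lv le w"
  using assms(1-3)
proof (induction w)
  case (Cons x w)
  show ?case
  proof (cases "w = []")
    case True
    then show ?thesis using Cons.prems by (intro exI[of _ "[x]"]) (simp add: vc_path_iff)
  next
    case w_nonempty: False
    then have xw: "{x, hd w} \<in> E" and w: "edge_walk E w" "set w \<subseteq> V" "x \<in> V"
      using Cons.prems by (auto simp: successively_Cons)
    obtain p where p: "vc_path V E (hd w) (last w) p" "walk_len lv le p \<le> walk_len lv le w"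
      using Cons.IH[OF w(1) w_nonempty w(2)] by blast
    have "0 \<le> lv x + le {x, hd w}" using lv le xw w(3) by simp
    then have walk_len_w: "walk_len lv le w \<le> walk_len lv le (x # w)"
      using w_nonempty by (simp add: walk_len_Cons)
    show ?thesis
    proof (cases "x \<in> set p")
      case True
      then obtain ys zs where split: "p = ys @ x # zs" by (meson split_list)
      have "walk_len lv le (x # zs) \<le> walk_len lv le p"
      proof (cases "ys = []")
        case False
        have "edge_walk E (ys @ x # zs)" "set ys \<subseteq> V"
          using p(1) split by (auto simp: vc_path_iff)
        then have "{last ys, x} \<in> E" "0 \<le> walk_len lv le ys"
          using False lv le by (auto simp: successively_append_iff intro!: walk_len_nonneg)
        then show ?thesis using False le by (simp add: split walk_len_append)
      qed (simp add: split)
      moreover have "vc_path V E x (last w) (x # zs)"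
        using p(1) by (auto simp: vc_path_iff split successively_append_iff)
      ultimately show ?thesis
        using p(2) walk_len_w w_nonempty by (intro exI[of _ "x # zs"]) auto
    next
      case False
      have "vc_path V E x (last w) (x # p)"
        using p(1) False xw w(3) by (auto simp: vc_path_iff successively_Cons)
      moreover have "walk_len lv le (x # p) = lv x + le {x, hd w} + walk_len lv le p"
        using p(1) by (simp add: vc_path_iff walk_len_Cons)
      ultimately show ?thesis
        using p(2) w_nonempty by (intro exI[of _ "x # p"]) (simp add: walk_len_Cons)
    qed
  qed
qed simp

lemma dir_path_len_simps [simp]:
  "dir_path_len len [] = 0"
  "dir_path_len len [a] = 0"
  "dir_path_len len (a # b # r) = len (a, b) + dir_path_len len (b # r)"
  by (simp_all add: dir_path_len_def)

lemma dir_path_len_Cons: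
  "r \<noteq> [] \<Longrightarrow> dir_path_len len (a # r) = len (a, hd r) + dir_path_len len r"
  by (cases r) auto

lemma ec_arcs_iff:
  "((x, c), (y, c')) \<in> ec_arcs V E \<longleftrightarrow>
     x = y \<and> x \<in> V \<and> (c, c') \<in> {(In, Mid), (Mid, Out), (In, Out)} \<or>
     c = Out \<and> c' = In \<and> {x, y} \<in> E"
  by (auto simp: ec_arcs_def)

lemma ec_len_gadget [simp]: "ec_len lv le ((x, c), (x, c')) = lv x"
  by (simp add: ec_len_def)

lemma ec_len_edge [simp]: "x \<noteq> y \<Longrightarrow> ec_len lv le ((x, c), (y, c')) = le {x, y}"
  by (simp add: ec_len_def)

fun ec_route :: "'a list \<Rightarrow> ('a \<times> copy) list" where
  "ec_route [] = []"
| "ec_route [y] = [(y, In), (y, Mid)]"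
| "ec_route (y # z # zs) = (y, In) # (y, Out) # ec_route (z # zs)"

lemma ec_route_Cons_neq_Nil [simp]: "ec_route (y # ys) \<noteq> []"
  by (cases ys) auto

lemma hd_ec_route [simp]: "hd (ec_route (y # ys)) = (y, In)"
  by (cases ys) auto

lemma last_ec_route: "ys \<noteq> [] \<Longrightarrow> last (ec_route ys) = (last ys, Mid)"
  by (induction ys rule: ec_route.induct) auto

lemma set_ec_route: "set (ec_route ys) \<subseteq> set ys \<times> UNIV"
  by (induction ys rule: ec_route.induct) auto

lemma distinct_ec_route: "distinct ys \<Longrightarrow> distinct (ec_route ys)"
  by (induction ys rule: ec_route.induct) (use set_ec_route in fastforce)+

lemma arc_walk_ec_route:
  "edge_walk E ys \<Longrightarrow> set ys \<subseteq> V \<Longrightarrow> arc_walk (ec_arcs V E) (ec_route ys)"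
  by (induction ys rule: ec_route.induct) (auto simp: ec_arcs_iff successively_Cons)

lemma dir_path_len_ec_route:
  assumes "\<And>x y. {x, y} \<in> E \<Longrightarrow> x \<noteq> y"
  shows "edge_walk E ys \<Longrightarrow> dir_path_len (ec_len lv le) (ec_route ys) = walk_len lv le ys"
  by (induction ys rule: ec_route.induct) (auto simp: assms walk_len_Cons dir_path_len_Cons)

lemma vc_path_to_ec_path:
  assumes p: "vc_path V E u v p" and "u \<noteq> v" and loop_free: "\<And>x y. {x, y} \<in> E \<Longrightarrow> x \<noteq> y"
  shows "\<exists>q. dir_path (ec_verts V) (ec_arcs V E) (u, Mid) (v, Mid) q \<and>
             dir_path_len (ec_len lv le) q = vc_path_len lv le p"
proof -
  obtain y ys where p_eq: "p = u # y # ys"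
    using p \<open>u \<noteq> v\<close> by (cases p) (auto simp: vc_path_iff neq_Nil_conv split: if_splits)
  have rest: "edge_walk E (y # ys)" "set (y # ys) \<subseteq> V" "distinct (y # ys)" "u \<notin> set (y # ys)"
      "{u, y} \<in> E" "last (y # ys) = v" "u \<in> V"
    using p by (auto simp: vc_path_iff p_eq)
  define q where "q = (u, Mid) # (u, Out) # ec_route (y # ys)"
  have "arc_walk (ec_arcs V E) q"
    using rest arc_walk_ec_route[of E "y # ys" V] by (simp add: q_def ec_arcs_iff successively_Cons)
  moreover have "distinct q" "set q \<subseteq> ec_verts V"
    using rest set_ec_route[of "y # ys"] distinct_ec_route[of "y # ys"]
    by (auto simp: q_def ec_verts_def)
  moreover have "last q = (v, Mid)"
    using rest by (simp add: q_def last_ec_route)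
  moreover have "dir_path_len (ec_len lv le) q = vc_path_len lv le p"
    using rest loop_free[of u y]
    by (simp add: q_def p_eq dir_path_len_Cons dir_path_len_ec_route[OF loop_free]
        vc_path_len_eq_walk_len)
  moreover have "q \<noteq> []" "hd q = (u, Mid)"
    by (simp_all add: q_def)
  ultimately show ?thesis unfolding dir_path_iff by blast
qed

text \<open>The correction term accounts for a walk starting at an \<open>Out\<close> copy: the projected walk
  pays \<open>\<ell>(fst a)\<close>, whereas the directed walk has already left the gadget of \<open>fst a\<close>.\<close>

lemma ec_walk_projection:
  assumes "arc_walk (ec_arcs V E) (a # b # r)" and "last (b # r) = (v, Mid)"
    and loop_free: "\<And>x y. {x, y} \<in> E \<Longrightarrow> x \<noteq> y" and lv: "\<forall>x\<in>V. 0 \<le> lv x"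
  shows "\<exists>w. edge_walk E w \<and> w \<noteq> [] \<and> hd w = fst a \<and> last w = v \<and>
             set w \<subseteq> fst ` set (a # b # r) \<and>
             walk_len lv le w \<le> dir_path_len (ec_len lv le) (a # b # r)
                                  + (if snd a = Out then lv (fst a) else 0)"
  using assms(1,2)
proof (induction r arbitrary: a b)
  case Nil
  then have "a = (v, In)" "v \<in> V"
    by (cases a; auto simp: ec_arcs_iff)+
  then show ?case using Nil by (intro exI[of _ "[v]"]) auto
next
  case (Cons c r)
  obtain w where w: "edge_walk E w" "w \<noteq> []" "hd w = fst b" "last w = v"
      "set w \<subseteq> fst ` set (b # c # r)"
      "walk_len lv le w \<le> dir_path_len (ec_len lv le) (b # c # r)
                            + (if snd b = Out then lv (fst b) else 0)"
    using Cons.IH[of b c] Cons.prems by auto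
  obtain x ca y cb where ab: "a = (x, ca)" "b = (y, cb)" by fastforce
  have "((x, ca), (y, cb)) \<in> ec_arcs V E" using Cons.prems(1) ab by simp
  then consider "x = y" "x \<in> V" "ca \<noteq> Out" | "ca = Out" "cb = In" "{x, y} \<in> E"
    unfolding ec_arcs_iff by blast
  then show ?case
  proof cases
    case 1
    then have "walk_len lv le w \<le> dir_path_len (ec_len lv le) (a # b # c # r)"
      using w(6) lv ab by (auto split: if_splits)
    then show ?thesis using w 1 ab by (intro exI[of _ w]) auto
  next
    case 2
    then have "x \<noteq> y" using loop_free by blast
    then have "walk_len lv le (x # w) \<le> dir_path_len (ec_len lv le) (a # b # c # r) + lv x"
      using w 2 ab by (simp add: walk_len_Cons)
    then show ?thesis using w 2 ab by (intro exI[of _ "x # w"]) (auto simp: successively_Cons)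
  qed
qed

lemma ec_path_to_vc_path:
  assumes q: "dir_path (ec_verts V) (ec_arcs V E) (u, Mid) (v, Mid) q" and "u \<noteq> v"
    and loop_free: "\<And>x y. {x, y} \<in> E \<Longrightarrow> x \<noteq> y"
    and lv: "\<forall>x\<in>V. 0 \<le> lv x" and le: "\<forall>e\<in>E. 0 \<le> le e"
  shows "\<exists>p. vc_path V E u v p \<and> vc_path_len lv le p \<le> dir_path_len (ec_len lv le) q"
proof -
  obtain b r where q_eq: "q = (u, Mid) # b # r"
    using q \<open>u \<noteq> v\<close> by (cases q) (auto simp: dir_path_iff neq_Nil_conv split: if_splits)
  obtain w where w: "edge_walk E w" "w \<noteq> []" "hd w = u" "last w = v" "set w \<subseteq> V"
      "walk_len lv le w \<le> dir_path_len (ec_len lv le) q"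
    using ec_walk_projection[of V E "(u, Mid)" b r v lv le] q loop_free lv
    by (fastforce simp: dir_path_iff q_eq ec_verts_def)
  obtain p where p: "vc_path V E u v p" "walk_len lv le p \<le> walk_len lv le w"
    using walk_shortcut_to_path[OF w(1,2,5) lv le] w(3,4) by blast
  have "vc_path_len lv le p = walk_len lv le p"
    using p(1) \<open>u \<noteq> v\<close> distinct_hd_eq_last_imp_singleton[of p]
    by (auto simp: vc_path_iff vc_path_len_eq_walk_len le_Suc_eq length_Suc_conv)
  then show ?thesis using p w(6) by auto
qed

lemma dir_dist_self: "s \<in> W \<Longrightarrow> dir_dist W A len s s = 0"
proof -
  assume "s \<in> W"
  then have "dir_path W A s s p \<longleftrightarrow> p = [s]" for p
    by (auto simp: dir_path_iff dest: distinct_hd_eq_last_imp_singleton)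
  then show ?thesis by (simp add: dir_dist_def)
qed

lemma vc_dist_self: "u \<in> V \<Longrightarrow> vc_dist V E lv le u u = 0"
proof -
  assume "u \<in> V"
  then have "vc_path V E u u p \<longleftrightarrow> p = [u]" for p
    by (auto simp: vc_path_iff dest: distinct_hd_eq_last_imp_singleton)
  then show ?thesis by (simp add: vc_dist_def vc_path_len_def)
qed

lemma vc_path_rev: "vc_path V E u v p \<Longrightarrow> vc_path V E v u (rev p)"
  by (auto simp: vc_path_iff hd_rev last_rev insert_commute)

lemma vc_path_len_rev: "vc_path_len lv le (rev p) = vc_path_len lv le p"
  by (simp add: vc_path_len_eq_walk_len walk_len_rev)

lemma vc_dist_commute: "vc_dist V E lv le u v = vc_dist V E lv le v u"
proof -
  have le_commute: "vc_dist V E lv le x y \<le> vc_dist V E lv le y x" for x y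
    unfolding vc_dist_def
    by (rule Inf_mono) (use vc_path_rev vc_path_len_rev in fastforce)
  show ?thesis using le_commute[of u v] le_commute[of v u] by (rule antisym)
qed

lemma vc_dist_eq_ec_dist:
  assumes loop_free: "\<And>x y. {x, y} \<in> E \<Longrightarrow> x \<noteq> y"
    and lv: "\<forall>x\<in>V. 0 \<le> lv x" and le: "\<forall>e\<in>E. 0 \<le> le e"
    and "u \<in> V" "v \<in> V"
  shows "vc_dist V E lv le u v = ec_dist V E lv le (u, Mid) (v, Mid)"
proof (cases "u = v")
  case True
  then show ?thesis
    using \<open>u \<in> V\<close> by (simp add: vc_dist_self ec_dist_def dir_dist_self ec_verts_def)
next
  case False
  show ?thesis
    unfolding vc_dist_def ec_dist_def dir_dist_def
  proof (rule antisym; rule Inf_mono)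
    show "\<exists>a\<in>{ereal (vc_path_len lv le p) | p. vc_path V E u v p}. a \<le> b"
      if "b \<in> {ereal (dir_path_len (ec_len lv le) q) | q.
                 dir_path (ec_verts V) (ec_arcs V E) (u, Mid) (v, Mid) q}" for b
      using that ec_path_to_vc_path[OF _ False loop_free lv le] by fastforce
    show "\<exists>a\<in>{ereal (dir_path_len (ec_len lv le) q) | q.
                 dir_path (ec_verts V) (ec_arcs V E) (u, Mid) (v, Mid) q}. a \<le> b"
      if "b \<in> {ereal (vc_path_len lv le p) | p. vc_path V E u v p}" for b
      using that vc_path_to_ec_path[where lv = lv and le = le, OF _ False loop_free] by fastforce
  qed
qed

theorem lemma4p6:
  fixes V :: "'a set" and E :: "'a set set"
    and lv cv :: "'a \<Rightarrow> real" and le ce :: "'a set \<Rightarrow> real"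
  assumes "vc_graph V E lv le cv ce"
    and "u \<in> V" and "v \<in> V"
  shows "vc_dist V E lv le u v = ec_dist V E lv le (u, Mid) (v, Mid)
       \<and> ec_dist V E lv le (u, Mid) (v, Mid) = ec_dist V E lv le (v, Mid) (u, Mid)"
proof -
  have loop_free: "x \<noteq> y" if "{x, y} \<in> E" for x y
    using assms(1) that by (force simp: vc_graph_def)
  have lv: "\<forall>x\<in>V. 0 \<le> lv x" and le: "\<forall>e\<in>E. 0 \<le> le e"
    using assms(1) by (auto simp: vc_graph_def less_imp_le)
  show ?thesis
    using vc_dist_eq_ec_dist[OF loop_free lv le] assms(2,3) vc_dist_commute by metis
qed

end
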